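(* Let $n\ge 1$, $s\in D^n$, and let $f\in\mathrm{Min}(s)$ be monic of degree $d$. Let $t\in D^{\mathbb{N}}$ be the extension of $s$ by $f$, i.e. $t_i=s_i$ for $1\le i\le n$ and $t_j=-(f_0t_{j-d}+\cdots+f_{d-1}t_{j-1})$ for all $j\ge n+1$. If the ideal $\mathrm{Ann}(t)\subseteq D[x]$ is principal, then $\mathrm{Ann}(t)=(f)$.
   Context: Let $D$ be a commutative integral domain with $1\neq 0$. For a finite sequence $s=(s_1,\dots,s_n)\in D^n$, a polynomial $f\in D[x]$ is an annihilator of $s$, written $f\in\mathrm{Ann}(s)$, if $f=0$, or $d=\deg f\ge 0$ and $\sum_{k=0}^{d}f_ks_{j-d+k}=0$ for all $j$ with $d+1\le j\le n$. $\mathrm{Min}(s)$ denotes the set of nonzero annihilators of $s$ of least possible degree. For an infinite sequence $t=(t_1,t_2,\dots)\in D^{\mathbb{N}}$, $\mathrm{Ann}(t)$ is the set of $f\in D[x]$ such that $f=0$, or $d=\deg f\ge0$ and $\sum_{k=0}^{d}f_kt_{j-d+k}=0$ for all $j\ge d+1$; it is an ideal of $D[x]$. *)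

theory Defs
  imports "HOL-Computational_Algebra.Polynomial"
begin

text \<open>Finite sequences s = (s_1,...,s_n) are functions nat => 'a, only indices 1..n matter.
  Infinite sequences t = (t_1,t_2,...) are functions nat => 'a, only indices >= 1 matter.\<close>

definition ann_fin :: "nat \<Rightarrow> (nat \<Rightarrow> 'a::comm_ring_1) \<Rightarrow> 'a poly \<Rightarrow> bool" where
  "ann_fin n s f \<longleftrightarrow> f = 0 \<or>
     (\<forall>j. degree f + 1 \<le> j \<and> j \<le> n \<longrightarrow>
        (\<Sum>k\<le>degree f. coeff f k * s (j - degree f + k)) = 0)"

definition min_ann :: "nat \<Rightarrow> (nat \<Rightarrow> 'a::comm_ring_1) \<Rightarrow> 'a poly set" where
  "min_ann n s = {f. f \<noteq> 0 \<and> ann_fin n s f \<and>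
     (\<forall>g. g \<noteq> 0 \<and> ann_fin n s g \<longrightarrow> degree f \<le> degree g)}"

definition ann_inf :: "(nat \<Rightarrow> 'a::comm_ring_1) \<Rightarrow> 'a poly set" where
  "ann_inf t = {f. f = 0 \<or>
     (\<forall>j. degree f + 1 \<le> j \<longrightarrow>
        (\<Sum>k\<le>degree f. coeff f k * t (j - degree f + k)) = 0)}"

definition principal_ideal :: "'a::comm_ring_1 poly \<Rightarrow> 'a poly set" where
  "principal_ideal g = {g * h | h. True}"

end

theory Submission
  imports Defs
begin

(* Let t extend s by the monic minimal annihilator f.
   (1) f annihilates t: for j <= n the relation at j only involves values of s and
       is the finite relation f in Ann(s); for j > n it is the defining recurrence,
       because f is monic.
   (2) Every annihilator of t restricts to an annihilator of s, since t agrees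
       with s on 1..n.
   (3) If Ann(t) = (g), then g divides f by (1), and g is a nonzero annihilator of
       s by (2), so deg f <= deg g.  A divisor of a monic polynomial in an integral
       domain with at least its degree differs from it by a unit constant, hence
       f and g divide each other and (g) = (f). *)

lemma ann_inf_imp_ann_fin:
  fixes s t :: "nat \<Rightarrow> 'a::comm_ring_1"
  assumes agree: "\<And>i. 1 \<le> i \<Longrightarrow> i \<le> n \<Longrightarrow> t i = s i"
    and g: "g \<in> ann_inf t"
  shows "ann_fin n s g"
  unfolding ann_fin_def
proof (intro disjI2 allI impI)
  fix j assume j: "degree g + 1 \<le> j \<and> j \<le> n"
  have "(\<Sum>k\<le>degree g. coeff g k * s (j - degree g + k))
      = (\<Sum>k\<le>degree g. coeff g k * t (j - degree g + k))"
  proof (intro sum.cong refl)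
    fix k assume "k \<in> {..degree g}"
    then have "1 \<le> j - degree g + k" "j - degree g + k \<le> n" using j by auto
    then show "coeff g k * s (j - degree g + k) = coeff g k * t (j - degree g + k)"
      by (simp add: agree)
  qed
  also have "\<dots> = 0"
    using g j unfolding ann_inf_def by auto
  finally show "(\<Sum>k\<le>degree g. coeff g k * s (j - degree g + k)) = 0" .
qed

lemma recurrence_extension_ann_inf:
  fixes s t :: "nat \<Rightarrow> 'a::comm_ring_1"
  assumes f_ann: "ann_fin n s f" and monic: "lead_coeff f = 1"
    and agree: "\<And>i. 1 \<le> i \<Longrightarrow> i \<le> n \<Longrightarrow> t i = s i"
    and recur: "\<And>j. n + 1 \<le> j \<Longrightarrow>
                  t j = - (\<Sum>k<degree f. coeff f k * t (j - degree f + k))"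
  shows "f \<in> ann_inf t"
  unfolding ann_inf_def
proof (intro CollectI disjI2 allI impI)
  fix j assume j: "degree f + 1 \<le> j"
  have f_nz: "f \<noteq> 0" using monic by auto
  show "(\<Sum>k\<le>degree f. coeff f k * t (j - degree f + k)) = 0"
  proof (cases "n + 1 \<le> j")
    case True
    \<comment> \<open>Split off the leading term, which is t j since f is monic.\<close>
    have "(\<Sum>k\<le>degree f. coeff f k * t (j - degree f + k))
        = (\<Sum>k<degree f. coeff f k * t (j - degree f + k)) + t j"
      using j monic by (simp add: lessThan_Suc_atMost[symmetric])
    then show ?thesis using recur[OF True] by simp
  next
    case False
    have "(\<Sum>k\<le>degree f. coeff f k * t (j - degree f + k))
        = (\<Sum>k\<le>degree f. coeff f k * s (j - degree f + k))"
    proof (intro sum.cong refl)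
      fix k assume "k \<in> {..degree f}"
      then have "1 \<le> j - degree f + k" "j - degree f + k \<le> n" using False j by auto
      then show "coeff f k * t (j - degree f + k) = coeff f k * s (j - degree f + k)"
        by (simp add: agree)
    qed
    also have "\<dots> = 0"
      using f_ann f_nz False j unfolding ann_fin_def by auto
    finally show ?thesis .
  qed
qed

lemma monic_dvd_divisor_of_larger_degree:
  fixes f g :: "'a::idom poly"
  assumes g_dvd: "g dvd f" and monic: "lead_coeff f = 1"
    and deg: "degree f \<le> degree g"
  shows "f dvd g"
proof -
  obtain h where f_eq: "f = g * h" using g_dvd by blast
  have "f \<noteq> 0" using monic by auto
  then have "g \<noteq> 0" "h \<noteq> 0" using f_eq by auto
  then have "degree f = degree g + degree h" using f_eq by (simp add: degree_mult_eq)
  then have "degree h = 0" using deg by simp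
  then obtain c where h_eq: "h = [:c:]" by (rule degree_eq_zeroE)
  have unit: "lead_coeff g * c = 1"
    using monic f_eq h_eq by (cases "c = 0") (auto simp: mult.commute)
  have "g = f * [:lead_coeff g:]"
    using f_eq h_eq unit by (simp add: mult.assoc mult.commute)
  then show ?thesis by (metis dvd_triv_left)
qed

lemma principal_ideal_eq_multiples: "principal_ideal g = {x. g dvd x}"
  unfolding principal_ideal_def by (auto elim: dvdE)

theorem mainTheorem1:
  fixes s t :: "nat \<Rightarrow> 'a::idom" and f :: "'a poly" and n :: nat
  assumes "n \<ge> 1"
    and "f \<in> min_ann n s"
    and "lead_coeff f = 1"
    and "\<forall>i. 1 \<le> i \<and> i \<le> n \<longrightarrow> t i = s i"
    and "\<forall>j. n + 1 \<le> j \<longrightarrow>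
           t j = - (\<Sum>k<degree f. coeff f k * t (j - degree f + k))"
    and "\<exists>g. ann_inf t = principal_ideal g"
  shows "ann_inf t = principal_ideal f"
proof -
  have f_ann: "ann_fin n s f"
    and f_min: "\<And>g. g \<noteq> 0 \<Longrightarrow> ann_fin n s g \<Longrightarrow> degree f \<le> degree g"
    using assms(2) unfolding min_ann_def by auto
  obtain g where gen: "ann_inf t = principal_ideal g" using assms(6) by blast
  have "f \<in> ann_inf t"
    using recurrence_extension_ann_inf[OF f_ann assms(3)] assms(4,5) by simp
  then have g_dvd_f: "g dvd f" unfolding gen principal_ideal_eq_multiples by simp
  have "g \<in> ann_inf t" unfolding gen principal_ideal_eq_multiples by simp
  then have "ann_fin n s g" using ann_inf_imp_ann_fin assms(4) by blast
  moreover have "g \<noteq> 0" using g_dvd_f assms(3) by auto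
  ultimately have "degree f \<le> degree g" using f_min by blast
  then have "f dvd g" using monic_dvd_divisor_of_larger_degree g_dvd_f assms(3) by blast
  then show ?thesis
    unfolding gen principal_ideal_eq_multiples using g_dvd_f by (auto intro: dvd_trans)
qed

end
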